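(* Let $\mathcal{H}$ be any $4$-uniform directed hypergraph on $\{1,2,3\}$ and consider any network dynamical system on $\mathcal{H}$ with smooth $F$ and coupling homogeneous in each order. Then its vector field is not equal to the Guckenheimer--Holmes vector field $$\dot x_1 = x_1 + a x_1^3 + b x_1x_2^2 + c x_1x_3^2,\quad \dot x_2 = x_2 + a x_2^3 + b x_2x_3^2 + c x_1^2x_2,\quad \dot x_3 = x_3 + a x_3^3 + b x_1^2x_3 + c x_2^2x_3$$ for any real $a,b,c$ with $b\neq c$; in particular the Guckenheimer--Holmes system with $a+b+c=-1$, $-\tfrac13<a<0$, $c<a<b<0$ cannot be realized.
   Context: A directed hypergraph on $\mathcal{V}=\{1,\dots,N\}$ is a set $\mathcal{E}$ of hyperedges $e=(T(e),H(e))$ with nonempty tail and head; the order of $e$ is $|T(e)|+1$; $\mathcal H$ is $m$-uniform if all hyperedges have order $m$ (for three vertices and $m=4$ this means $T(e)=\{1,2,3\}$ for every $e$). A network dynamical system with coupling homogeneous in each order is $\dot x_k = F(x_k) + \sum_{e\in\mathcal{E}:\,k\in H(e)} G^{(|e|)}(x_k; x_{T(e)})$ on $\mathbb{R}^N$, with $G^{(m)}:\mathbb{R}\times\mathbb{R}^{m-1}\to\mathbb{R}$ smooth, symmetric in its last $m-1$ arguments and depending nontrivially on them. *)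

theory Defs
  imports "HOL-Analysis.Analysis"
begin

fun iter_dderiv :: "'a::real_normed_vector list \<Rightarrow> ('a \<Rightarrow> 'b::real_normed_vector) \<Rightarrow> 'a \<Rightarrow> 'b" where
  "iter_dderiv [] f = f"
| "iter_dderiv (v # vs) f = (\<lambda>x. frechet_derivative (iter_dderiv vs f) (at x) v)"

definition smooth :: "('a::real_normed_vector \<Rightarrow> 'b::real_normed_vector) \<Rightarrow> bool" where
  "smooth f \<longleftrightarrow> (\<forall>vs x. iter_dderiv vs f differentiable (at x))"

(* directed hypergraph on {1,2,3}: hyperedges (tail, head), nonempty tail/head *)
definition dir_hypergraph3 :: "(nat set \<times> nat set) set \<Rightarrow> bool" where
  "dir_hypergraph3 E \<longleftrightarrow> (\<forall>e\<in>E. fst e \<noteq> {} \<and> snd e \<noteq> {} \<and> fst e \<subseteq> {1,2,3} \<and> snd e \<subseteq> {1,2,3})"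

(* 4-uniform: every hyperedge has order |T(e)|+1 = 4 *)
definition uniform :: "nat \<Rightarrow> (nat set \<times> nat set) set \<Rightarrow> bool" where
  "uniform m E \<longleftrightarrow> (\<forall>e\<in>E. card (fst e) + 1 = m)"

(* Vector field of the network dynamical system on a 4-uniform hypergraph on {1,2,3}
   (tails are {1,2,3}, so the coupling argument x_{T(e)} is (x 1, x 2, x 3);
   G is symmetric in its tail arguments so the order is immaterial). *)
definition net_field :: "(real \<Rightarrow> real) \<Rightarrow> (real \<Rightarrow> real \<Rightarrow> real \<Rightarrow> real \<Rightarrow> real)
    \<Rightarrow> (nat set \<times> nat set) set \<Rightarrow> (nat \<Rightarrow> real) \<Rightarrow> nat \<Rightarrow> real" where
  "net_field F G E x k = F (x k) + (\<Sum>e\<in>{e\<in>E. k \<in> snd e}. G (x k) (x 1) (x 2) (x 3))"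

definition gh_field :: "real \<Rightarrow> real \<Rightarrow> real \<Rightarrow> (nat \<Rightarrow> real) \<Rightarrow> nat \<Rightarrow> real" where
  "gh_field a b c x k =
     (if k = 1 then x 1 + a * x 1 ^ 3 + b * x 1 * x 2 ^ 2 + c * x 1 * x 3 ^ 2
      else if k = 2 then x 2 + a * x 2 ^ 3 + b * x 2 * x 3 ^ 2 + c * x 1 ^ 2 * x 2
      else x 3 + a * x 3 ^ 3 + b * x 1 ^ 2 * x 3 + c * x 2 ^ 2 * x 3)"

end

theory Submission
  imports Defs
begin

text \<open>In a 4-uniform hypergraph on three vertices every tail is \<open>{1,2,3}\<close>, so each coupling
  term at vertex 1 is \<open>G(x\<^sub>1; x\<^sub>1, x\<^sub>2, x\<^sub>3)\<close>, and by the symmetry of \<open>G\<close> the equation of vertex 1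
  is unchanged when \<open>x\<^sub>2\<close> and \<open>x\<^sub>3\<close> are exchanged. The Guckenheimer--Holmes equation of vertex 1
  changes by \<open>(b - c) x\<^sub>1 (x\<^sub>3\<^sup>2 - x\<^sub>2\<^sup>2)\<close> under this exchange, which is nonzero at \<open>x = (1, 1, 0)\<close>.\<close>

definition swap23 :: "(nat \<Rightarrow> real) \<Rightarrow> nat \<Rightarrow> real" where
  "swap23 x = x(2 := x 3, 3 := x 2)"

lemma net_field_swap23_vertex1:
  assumes "\<And>y u v w. G y u v w = G y u w v"
  shows "net_field F G E (swap23 x) 1 = net_field F G E x 1"
  unfolding net_field_def swap23_def using assms by simp

lemma gh_field_swap23_vertex1:
  "gh_field a b c (swap23 x) 1 - gh_field a b c x 1 = (b - c) * x 1 * (x 3 ^ 2 - x 2 ^ 2)"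
  unfolding gh_field_def swap23_def by (simp add: algebra_simps)

theorem mainTheorem9:
  fixes E :: "(nat set \<times> nat set) set"
    and F :: "real \<Rightarrow> real"
    and G :: "real \<Rightarrow> real \<Rightarrow> real \<Rightarrow> real \<Rightarrow> real"
    and a b c :: real
  assumes "dir_hypergraph3 E"
    and "uniform 4 E"
    and "smooth F"
    and "smooth (\<lambda>(y, u, v, w). G y u v w)"
    and "\<And>y u v w. G y u v w = G y v u w"
    and sym_tail: "\<And>y u v w. G y u v w = G y u w v"
    and "\<exists>y u v w u' v' w'. G y u v w \<noteq> G y u' v' w'"
    and "b \<noteq> c"
  shows "\<not> (\<forall>x. \<forall>k\<in>{1,2,3}. net_field F G E x k = gh_field a b c x k)"
proof
  assume realizes: "\<forall>x. \<forall>k\<in>{1,2,3}. net_field F G E x k = gh_field a b c x k"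
  define x :: "nat \<Rightarrow> real" where "x = (\<lambda>i. if i = 3 then 0 else 1)"
  have "gh_field a b c (swap23 x) 1 = net_field F G E (swap23 x) 1"
    using realizes by simp
  also have "\<dots> = net_field F G E x 1"
    using sym_tail by (rule net_field_swap23_vertex1)
  also have "\<dots> = gh_field a b c x 1"
    using realizes by simp
  finally have "gh_field a b c (swap23 x) 1 = gh_field a b c x 1" .
  with gh_field_swap23_vertex1[of a b c x] have "(b - c) * x 1 * (x 3 ^ 2 - x 2 ^ 2) = 0"
    by simp
  with \<open>b \<noteq> c\<close> show False
    unfolding x_def by simp
qed

end
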